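(* Let $\{\psi_j\}_{j\ge1}$ be the Fourier basis of $L^2([0,1])$: $\psi_1\equiv1$, $\psi_{2j}(t)=\sqrt2\cos(2\pi jt)$, $\psi_{2j+1}(t)=\sqrt2\sin(2\pi jt)$ for $j\in\mathbb N$. For $j,k\in\mathbb N$ let $\Lambda_{j,k}=\log(2(j\vee k))$. There exists a constant $c_{L,W}>0$, independent of $j$ and $k$, such that for all $j,k\in\mathbb N$ and all $\epsilon\in(0,1/2)$ there exists a deep ReLU network $\widetilde\Psi_{jk}:[0,1]^2\to\mathbb R$ of depth $L\le c_{L,W}\Lambda_{j,k}\log^2(1/\epsilon)$ and width $W\le c_{L,W}\Lambda_{j,k}\log^3(1/\epsilon)$ satisfying \[ \sup_{(s,t)\in[0,1]^2}\big|\psi_j(s)\psi_k(t)-\widetilde\Psi_{jk}(s,t)\big|\le\epsilon . \]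
   Context: A deep ReLU network of depth $L$ and width $W$ is a map of the form $x\mapsto A_L\sigma_{b_L}A_{L-1}\cdots A_1\sigma_{b_1}A_0x$ with matrices $A_l$ having at most $W$ rows/columns in hidden layers, bias vectors $b_l$, and $\sigma_b(y)=(\max\{y_i-b_i,0\})_i$. *)

theory Defs
  imports Complex_Main
begin

text \<open>Fourier basis of L2([0,1]), indexed from 1 (index 0 is unused and set to 0).\<close>
definition fourier_psi :: "nat \<Rightarrow> real \<Rightarrow> real" where
  "fourier_psi n t =
     (if n = 0 then 0
      else if n = 1 then 1
      else if even n then sqrt 2 * cos (2 * pi * real (n div 2) * t)
      else sqrt 2 * sin (2 * pi * real (n div 2) * t))"

definition mat_app :: "(nat \<Rightarrow> nat \<Rightarrow> real) \<Rightarrow> nat \<Rightarrow> (nat \<Rightarrow> real) \<Rightarrow> (nat \<Rightarrow> real)" where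
  "mat_app A n x = (\<lambda>i. \<Sum>j<n. A i j * x j)"

definition relu_shift :: "(nat \<Rightarrow> real) \<Rightarrow> (nat \<Rightarrow> real) \<Rightarrow> (nat \<Rightarrow> real)" where
  "relu_shift b y = (\<lambda>i. max (y i - b i) 0)"

text \<open>Evaluation of x |-> A_L sigma_{b_L} A_{L-1} ... A_1 sigma_{b_1} A_0 x,
  where d = [d_0, d_1, ..., d_{L+1}] are the layer dimensions, As = [A_0, ..., A_L]
  (A_l is a d_{l+1} x d_l matrix) and bs = [b_1, ..., b_L].\<close>
definition relu_net_eval ::
  "nat list \<Rightarrow> (nat \<Rightarrow> nat \<Rightarrow> real) list \<Rightarrow> (nat \<Rightarrow> real) list \<Rightarrow> (nat \<Rightarrow> real) \<Rightarrow> (nat \<Rightarrow> real)" where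
  "relu_net_eval d As bs x =
     foldl (\<lambda>h (A, b, n). mat_app A n (relu_shift b h))
           (mat_app (hd As) (hd d) x)
           (zip (tl As) (zip bs (tl d)))"

definition is_relu_net ::
  "nat \<Rightarrow> nat \<Rightarrow> nat \<Rightarrow> nat \<Rightarrow> nat list \<Rightarrow> (nat \<Rightarrow> nat \<Rightarrow> real) list \<Rightarrow> (nat \<Rightarrow> real) list \<Rightarrow> bool" where
  "is_relu_net din dout L W d As bs \<longleftrightarrow>
     length d = L + 2 \<and> d ! 0 = din \<and> d ! (L + 1) = dout \<and>
     length As = L + 1 \<and> length bs = L \<and>
     (\<forall>l\<in>{1..L}. d ! l \<le> W)"

end

theory Submission
  imports Defs
begin

text \<open>By the product-to-sum formula, \<open>\<psi>\<^sub>j(s) \<psi>\<^sub>k(t)\<close> is a multiple of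
  \<open>cos (2 \<pi> X\<^sub>1) + cos (2 \<pi> X\<^sub>2)\<close> with \<open>X\<^sub>1, X\<^sub>2\<close> affine in \<open>(s, t)\<close> and between \<open>0\<close> and
  \<open>max j k + 2\<close>, and one network evaluates both cosines in parallel. About \<open>log\<^sub>2 (max j k)\<close>
  reflections \<open>x \<mapsto> c - |x - c|\<close> move the arguments into \<open>[0, 1]\<close> without changing the
  cosines. There \<open>cos (2 \<pi> y)\<close> is obtained from \<open>cos \<theta> \<approx> 1 - \<theta>^2/2\<close> at
  \<open>\<theta> = 2 \<pi> y / 2^n\<close> by \<open>n \<approx> log (1/\<epsilon>)\<close> doublings \<open>cos 2\<phi> = 2 cos^2 \<phi> - 1\<close>, and every
  squaring is done with Yarotsky's sawtooth expansion \<open>x - x^2 = \<Sum>\<^sub>s g^s(x) / 4^s\<close>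
  truncated after \<open>2 n\<close> terms. This gives depth \<open>O(log max(j,k) + log^2(1/\<epsilon>))\<close> at
  constant width.\<close>

section \<open>Squaring with sawtooth functions\<close>

definition hat :: "real \<Rightarrow> real" where
  "hat z = 2 * max z 0 - 4 * max (z - 1/2) 0 + 2 * max (z - 1) 0"

text \<open>Yarotsky's recurrence; iterated, it gives \<open>z - z^2 = (\<Sum>s\<ge>1. hat^s z / 4^s)\<close>.\<close>

lemma hat_unit_interval:
  assumes "0 \<le> z" "z \<le> 1"
  shows "0 \<le> hat z" "hat z \<le> 1" "z - z^2 = hat z / 4 + (hat z - (hat z)^2) / 4"
proof -
  have "hat z = (if z \<le> 1/2 then 2 * z else 2 - 2 * z)"
    using assms by (simp add: hat_def)
  then show "0 \<le> hat z" "hat z \<le> 1" "z - z^2 = hat z / 4 + (hat z - (hat z)^2) / 4"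
    using assms by (auto simp: power2_eq_square field_simps)
qed

lemma self_minus_square_bounds:
  fixes z :: real
  assumes "0 \<le> z" "z \<le> 1"
  shows "0 \<le> z - z^2" "z - z^2 \<le> 1/4"
proof -
  have "0 \<le> (z - 1/2)^2" by simp
  then show "z - z^2 \<le> 1/4" by (simp add: power2_eq_square algebra_simps)
  show "0 \<le> z - z^2" using assms by (simp add: power2_eq_square mult_left_le)
qed

definition run :: "('a \<Rightarrow> 'a) list \<Rightarrow> 'a \<Rightarrow> 'a" where
  "run Ts p = foldl (\<lambda>p T. T p) p Ts"

lemma run_Nil [simp]: "run [] p = p"
  and run_Cons [simp]: "run (T # Ts) p = run Ts (T p)"
  and run_append [simp]: "run (Ts @ Us) p = run Us (run Ts p)"
  by (simp_all add: run_def)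

text \<open>A state \<open>(u, z, a)\<close> of the three-register machine holds an input \<open>u\<close>, the current
  sawtooth iterate \<open>z\<close> and a partial sum \<open>a\<close>; after the hat steps \<open>readout\<close> approximates \<open>u^2\<close>.\<close>

type_synonym state = "real \<times> real \<times> real"

definition readout :: "state \<Rightarrow> real" where
  "readout = (\<lambda>(u, z, a). u - a)"

definition hat_step :: "nat \<Rightarrow> state \<Rightarrow> state" where
  "hat_step s = (\<lambda>(u, z, a). (u, hat z, a + hat z / 4 ^ s))"

definition hat_steps :: "nat \<Rightarrow> (state \<Rightarrow> state) list" where
  "hat_steps r = map hat_step [1..<Suc r]"

lemma hat_steps_invariant:
  assumes "0 \<le> v" "v \<le> 1"
  shows "\<exists>z a. run (hat_steps r) (v, v, 0) = (v, z, a) \<and> 0 \<le> z \<and> z \<le> 1 \<and>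
           v - v^2 = a + (z - z^2) / 4 ^ r"
proof (induction r)
  case 0
  show ?case using assms by (simp add: hat_steps_def)
next
  case (Suc r)
  then obtain z a where run: "run (hat_steps r) (v, v, 0) = (v, z, a)"
    and z: "0 \<le> z" "z \<le> 1" and inv: "v - v^2 = a + (z - z^2) / 4 ^ r"
    by blast
  have "run (hat_steps (Suc r)) (v, v, 0) = (v, hat z, a + hat z / 4 ^ Suc r)"
    using run by (simp add: hat_steps_def hat_step_def)
  moreover have "(z - z^2) / 4 ^ r = hat z / 4 ^ Suc r + (hat z - (hat z)^2) / 4 ^ Suc r"
    unfolding hat_unit_interval(3)[OF z] by (simp add: field_simps)
  ultimately show ?case using inv hat_unit_interval(1,2)[OF z] by auto
qed

lemma hat_steps_square:
  assumes "0 \<le> v" "v \<le> 1"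
  shows "\<bar>readout (run (hat_steps r) (v, v, 0)) - v^2\<bar> \<le> 1 / (4 * 4 ^ r)"
proof -
  obtain z a where run: "run (hat_steps r) (v, v, 0) = (v, z, a)"
    and z: "0 \<le> z" "z \<le> 1" and inv: "v - v^2 = a + (z - z^2) / 4 ^ r"
    using hat_steps_invariant[OF assms] by blast
  have "readout (run (hat_steps r) (v, v, 0)) - v^2 = (z - z^2) / 4 ^ r"
    using run inv by (simp add: readout_def)
  moreover have "(z - z^2) / 4 ^ r \<le> (1/4) / 4 ^ r"
    using self_minus_square_bounds[OF z] by (intro divide_right_mono) auto
  ultimately show ?thesis
    using self_minus_square_bounds[OF z] by simp
qed

definition clamp_abs :: "real \<Rightarrow> real" where
  "clamp_abs w = \<bar>max (-1) (min w 1)\<bar>"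

lemma clamp_abs_unit_interval: "0 \<le> clamp_abs w" "clamp_abs w \<le> 1"
  by (auto simp: clamp_abs_def)

lemma clamp_abs_id: "0 \<le> w \<Longrightarrow> w \<le> 1 \<Longrightarrow> clamp_abs w = w"
  by (simp add: clamp_abs_def)

lemma clamp_abs_square_error:
  assumes "\<bar>C\<bar> \<le> 1"
  shows "\<bar>(clamp_abs w)^2 - C^2\<bar> \<le> 2 * \<bar>w - C\<bar>"
proof -
  define q where "q = max (-1) (min w 1)"
  have q: "\<bar>q\<bar> \<le> 1" "\<bar>q - C\<bar> \<le> \<bar>w - C\<bar>"
    using assms by (auto simp: q_def)
  have "\<bar>(clamp_abs w)^2 - C^2\<bar> = \<bar>q - C\<bar> * \<bar>q + C\<bar>"
    by (simp add: clamp_abs_def q_def power2_eq_square algebra_simps flip: abs_mult)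
  also have "\<dots> \<le> \<bar>w - C\<bar> * 2"
    using q assms by (intro mult_mono) auto
  finally show ?thesis by simp
qed

text \<open>The clamp lets a stage square an approximation \<open>w\<close> of a number in \<open>[-1, 1]\<close>
  without leaving the unit interval (see \<open>clamp_abs_square_error\<close>); the absolute value is
  harmless because only the square is used.\<close>

definition square_start :: "real \<Rightarrow> real \<Rightarrow> state \<Rightarrow> state" where
  "square_start \<alpha> \<beta> p = (clamp_abs (\<alpha> * readout p + \<beta>), clamp_abs (\<alpha> * readout p + \<beta>), 0)"

definition square_stage :: "nat \<Rightarrow> real \<Rightarrow> real \<Rightarrow> (state \<Rightarrow> state) list" where
  "square_stage r \<alpha> \<beta> = square_start \<alpha> \<beta> # hat_steps r"

lemma square_stage_error:
  "\<bar>readout (run (square_stage r \<alpha> \<beta>) p) - (clamp_abs (\<alpha> * readout p + \<beta>))^2\<bar> \<le> 1 / (4 * 4 ^ r)"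
  using hat_steps_square[of "clamp_abs (\<alpha> * readout p + \<beta>)" r] clamp_abs_unit_interval
  by (simp add: square_stage_def square_start_def)

section \<open>Cosine by angle doubling\<close>

lemma cos_taylor_4:
  fixes x :: real
  shows "\<bar>cos x - (1 - x^2 / 2)\<bar> \<le> x^4 / 24"
proof -
  obtain t where t: "cos x = (\<Sum>m<4. cos_coeff m * x ^ m) + cos (t + 1/2 * real 4 * pi) / fact 4 * x ^ 4"
    using Maclaurin_cos_expansion[of x 4] by blast
  have "(\<Sum>m<4. cos_coeff m * x ^ m) = 1 - x^2 / 2"
    by (simp add: cos_coeff_def lessThan_nat_numeral fact_numeral)
  moreover have "\<bar>cos (t + 1/2 * real 4 * pi)\<bar> * x^4 \<le> x^4"
    by (intro mult_left_le_one_le) (auto simp: abs_cos_le_one)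
  ultimately show ?thesis
    using t by (simp add: fact_numeral abs_mult divide_le_cancel)
qed

lemma cos_doubling_step:
  assumes "\<bar>readout q - (clamp_abs w)^2\<bar> \<le> \<delta>" "\<bar>w - cos \<phi>\<bar> + \<delta> \<le> E"
  shows "\<bar>2 * readout q - 1 - cos (2 * \<phi>)\<bar> + \<delta> \<le> 4 * E"
proof -
  have "2 * readout q - 1 - cos (2 * \<phi>) =
      2 * (readout q - (clamp_abs w)^2) + 2 * ((clamp_abs w)^2 - (cos \<phi>)^2)"
    unfolding cos_double_cos by (simp add: algebra_simps)
  then have "\<bar>2 * readout q - 1 - cos (2 * \<phi>)\<bar> \<le>
      2 * \<bar>readout q - (clamp_abs w)^2\<bar> + 2 * \<bar>(clamp_abs w)^2 - (cos \<phi>)^2\<bar>"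
    using abs_triangle_ineq by (metis abs_mult abs_numeral)
  also have "\<dots> \<le> 2 * \<delta> + 4 * \<bar>w - cos \<phi>\<bar>"
    using assms(1) clamp_abs_square_error[OF abs_cos_le_one, of w \<phi>] by simp
  finally have "\<bar>2 * readout q - 1 - cos (2 * \<phi>)\<bar> \<le> 2 * \<delta> + 4 * \<bar>w - cos \<phi>\<bar>" .
  moreover have "0 \<le> \<delta>"
    using assms(1) abs_ge_zero order_trans by blast
  ultimately show ?thesis
    using assms(2) by argo
qed

text \<open>Each doubling step quadruples the error of the angle approximation, while the squaring
  error \<open>\<delta>\<close> stays fixed because every stage squares afresh.\<close>

lemma cos_doubling_iterate:
  assumes D: "\<And>p. \<bar>readout (run D p) - (clamp_abs (2 * readout p - 1))^2\<bar> \<le> \<delta>"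
    and "\<bar>readout q - (clamp_abs w)^2\<bar> \<le> \<delta>" "\<bar>w - cos \<phi>\<bar> + \<delta> \<le> E"
  shows "\<bar>2 * readout (run (concat (replicate i D)) q) - 1 - cos (2 ^ Suc i * \<phi>)\<bar> + \<delta>
           \<le> 4 ^ Suc i * E"
  using assms(2,3)
proof (induction i arbitrary: q w \<phi> E)
  case 0
  then show ?case using cos_doubling_step by simp
next
  case (Suc i)
  have "\<bar>2 * readout q - 1 - cos (2 * \<phi>)\<bar> + \<delta> \<le> 4 * E"
    using cos_doubling_step[OF Suc.prems] .
  from Suc.IH[OF D this] show ?case
    by (simp add: mult.assoc mult.left_commute)
qed

text \<open>With \<open>\<theta> = 2 \<pi> y / 2^n\<close>: the first stage squares \<open>y\<close>, the second forms
  \<open>1 - \<theta>^2/2 = 1 - (2 \<pi>^2 / 4^n) y^2 \<approx> cos \<theta>\<close>, and the remaining \<open>n - 1\<close> stages together with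
  the final readout \<open>2 u - 1\<close> double the angle \<open>n\<close> times. Squaring to precision \<open>4^(-2n)\<close>
  leaves room for the factor \<open>4^n\<close> by which doubling amplifies errors.\<close>

definition cos_steps :: "nat \<Rightarrow> (state \<Rightarrow> state) list" where
  "cos_steps n =
     square_stage (2 * n) 1 0 @ square_stage (2 * n) (- (2 * pi^2 / 4 ^ n)) 1 @
     concat (replicate (n - 1) (square_stage (2 * n) 2 (-1)))"

lemma cos_error_budget:
  fixes y :: real
  assumes "0 \<le> y" "y \<le> 1" "1 \<le> n"
  defines "\<delta> \<equiv> 1 / (4 * 4 ^ (2 * n))"
  shows "4 ^ n * ((2 * pi * y / 2 ^ n)^4 / 24 + 2 * pi^2 / 4 ^ n * \<delta> + \<delta>) \<le> 180 / 4 ^ n"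
proof -
  define X :: real where "X = 4 ^ n"
  have X: "1 \<le> X" by (simp add: X_def)
  have "X = (2 ^ n)^2"
    by (simp add: X_def power2_eq_square flip: power_mult_distrib)
  then have pow: "(2 ^ n)^4 = X^2" "4 ^ (2 * n) = X^2"
    by (simp flip: power_mult) (simp add: X_def mult.commute flip: power_mult)
  have "pi * y \<le> pi" "0 \<le> pi * y"
    using assms(1,2) by (simp_all add: mult_left_le)
  then have "(2 * pi * y)^4 \<le> 8^4"
    using pi_less_4 by (intro power_mono) linarith+
  then have "(2 * pi * y)^4 / 24 \<le> 171"
    by simp
  then have taylor: "X * ((2 * pi * y / 2 ^ n)^4 / 24) \<le> 171 / X"
    using X by (simp add: power_divide pow power2_eq_square divide_simps)
  have "pi^2 \<le> 4^2"
    using pi_less_4 pi_gt_zero by (intro power_mono) auto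
  then have "X * (2 * pi^2 / X * \<delta>) \<le> 8 / X"
    using X by (simp add: \<delta>_def pow power2_eq_square divide_simps)
  moreover have "X * \<delta> \<le> 1 / X"
    using X by (simp add: \<delta>_def pow power2_eq_square divide_simps)
  ultimately show ?thesis
    using taylor by (simp add: X_def[symmetric] distrib_left)
qed

lemma cos_steps_error:
  assumes "0 \<le> y" "y \<le> 1" "1 \<le> n"
  shows "\<bar>2 * readout (run (cos_steps n) (y, 0, 0)) - 1 - cos (2 * pi * y)\<bar> \<le> 180 / 4 ^ n"
proof -
  define \<delta> :: real where "\<delta> = 1 / (4 * 4 ^ (2 * n))"
  define \<kappa> :: real where "\<kappa> = 2 * pi^2 / 4 ^ n"
  define \<theta> where "\<theta> = 2 * pi * y / 2 ^ n"
  have "0 \<le> \<delta>"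
    by (simp add: \<delta>_def)
  define q1 where "q1 = run (square_stage (2 * n) 1 0) (y, 0, 0)"
  define q2 where "q2 = run (square_stage (2 * n) (- \<kappa>) 1) q1"
  have q1: "\<bar>readout q1 - y^2\<bar> \<le> \<delta>"
    using square_stage_error[of "2 * n" 1 0 "(y, 0, 0)"] assms
    by (simp add: q1_def \<delta>_def readout_def clamp_abs_id)
  have q2: "\<bar>readout q2 - (clamp_abs (1 - \<kappa> * readout q1))^2\<bar> \<le> \<delta>"
    using square_stage_error[of "2 * n" "- \<kappa>" 1 q1] by (simp add: q2_def \<delta>_def)
  have "(4::real) ^ n = (2 ^ n)^2"
    by (simp add: power2_eq_square flip: power_mult_distrib)
  then have "\<kappa> * y^2 = \<theta>^2 / 2"
    by (simp add: \<kappa>_def \<theta>_def power_divide power_mult_distrib)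
  then have "1 - \<kappa> * readout q1 - cos \<theta> = (1 - \<theta>^2 / 2 - cos \<theta>) + \<kappa> * (y^2 - readout q1)"
    by (simp add: algebra_simps)
  then have "\<bar>1 - \<kappa> * readout q1 - cos \<theta>\<bar> \<le> \<bar>cos \<theta> - (1 - \<theta>^2 / 2)\<bar> + \<kappa> * \<bar>readout q1 - y^2\<bar>"
    using abs_triangle_ineq[of "1 - \<theta>^2 / 2 - cos \<theta>" "\<kappa> * (y^2 - readout q1)"]
    by (simp add: \<kappa>_def abs_mult abs_minus_commute)
  also have "\<dots> \<le> \<theta>^4 / 24 + \<kappa> * \<delta>"
    using cos_taylor_4[of \<theta>] q1 by (intro add_mono mult_left_mono) (auto simp: \<kappa>_def)
  finally have start: "\<bar>1 - \<kappa> * readout q1 - cos \<theta>\<bar> + \<delta> \<le> \<theta>^4 / 24 + \<kappa> * \<delta> + \<delta>"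
    by simp
  have D: "\<bar>readout (run (square_stage (2 * n) 2 (-1)) p) - (clamp_abs (2 * readout p - 1))^2\<bar> \<le> \<delta>" for p
    using square_stage_error[of "2 * n" 2 "-1" p] by (simp add: \<delta>_def)
  have "\<bar>2 * readout (run (concat (replicate (n - 1) (square_stage (2 * n) 2 (-1)))) q2) - 1
        - cos (2 ^ Suc (n - 1) * \<theta>)\<bar> + \<delta> \<le> 4 ^ Suc (n - 1) * (\<theta>^4 / 24 + \<kappa> * \<delta> + \<delta>)"
    using cos_doubling_iterate[OF D q2 start] .
  moreover have "2 ^ Suc (n - 1) * \<theta> = 2 * pi * y" "Suc (n - 1) = n"
    using assms(3) by (simp_all add: \<theta>_def)
  ultimately have "\<bar>2 * readout (run (cos_steps n) (y, 0, 0)) - 1 - cos (2 * pi * y)\<bar> + \<delta>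
      \<le> 4 ^ n * (\<theta>^4 / 24 + \<kappa> * \<delta> + \<delta>)"
    by (simp add: cos_steps_def q1_def q2_def \<kappa>_def)
  also have "\<dots> \<le> 180 / 4 ^ n"
    unfolding \<theta>_def \<kappa>_def \<delta>_def by (rule cos_error_budget[OF assms])
  finally show ?thesis
    using \<open>0 \<le> \<delta>\<close> by linarith
qed

section \<open>Reducing the argument\<close>

lemma cos_sin_2pi_nat: "cos (2 * pi * real K) = 1" "sin (2 * pi * real K) = 0"
  by (metis cos_2npi mult.commute mult.assoc) (metis sin_2npi mult.commute mult.assoc)

lemma cos_2pi_add_nat: "cos (2 * pi * (x + real K)) = cos (2 * pi * x)"
  by (simp add: distrib_left cos_add cos_sin_2pi_nat)

lemma cos_2pi_nat_minus: "cos (2 * pi * (real K - x)) = cos (2 * pi * x)"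
  by (simp add: right_diff_distrib cos_diff cos_sin_2pi_nat)

lemma cos_2pi_reflect:
  fixes x :: real
  shows "cos (2 * pi * (real N - \<bar>x - real N\<bar>)) = cos (2 * pi * x)"
proof (cases "x \<ge> N")
  case True
  then have "real N - \<bar>x - real N\<bar> = real (2 * N) - x"
    by simp
  then show ?thesis
    using cos_2pi_nat_minus[of "2 * N" x] by simp
next
  case False
  then show ?thesis by simp
qed

definition reflect_step :: "real \<Rightarrow> state \<Rightarrow> state" where
  "reflect_step c = (\<lambda>(u, z, a). (c - \<bar>u - c\<bar>, 0, 0))"

text \<open>The reflections at \<open>2^(l-1), ..., 2, 1\<close> fold \<open>[0, 2^l]\<close> onto \<open>[0, 1]\<close>.\<close>

primrec reflect_steps :: "nat \<Rightarrow> (state \<Rightarrow> state) list" where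
  "reflect_steps 0 = []"
| "reflect_steps (Suc l) = reflect_step (2 ^ l) # reflect_steps l"

lemma reflect_steps_cos:
  assumes "0 \<le> x" "x \<le> 2 ^ l"
  shows "\<exists>y. run (reflect_steps l) (x, 0, 0) = (y, 0, 0) \<and> 0 \<le> y \<and> y \<le> 1 \<and>
           cos (2 * pi * y) = cos (2 * pi * x)"
  using assms
proof (induction l arbitrary: x)
  case 0
  then show ?case by auto
next
  case (Suc l)
  define x' :: real where "x' = 2 ^ l - \<bar>x - 2 ^ l\<bar>"
  have "0 \<le> x'" "x' \<le> 2 ^ l"
    using Suc.prems by (auto simp: x'_def)
  moreover have "cos (2 * pi * x') = cos (2 * pi * x)"
    using cos_2pi_reflect[of "2 ^ l" x] by (simp add: x'_def)
  moreover have "run (reflect_steps (Suc l)) (x, 0, 0) = run (reflect_steps l) (x', 0, 0)"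
    by (simp add: reflect_step_def x'_def)
  ultimately show ?case
    using Suc.IH by metis
qed

definition cos_program :: "nat \<Rightarrow> nat \<Rightarrow> (state \<Rightarrow> state) list" where
  "cos_program l n = reflect_steps l @ cos_steps n"

lemma cos_program_error:
  assumes "0 \<le> x" "x \<le> 2 ^ l" "1 \<le> n"
  shows "\<bar>2 * readout (run (cos_program l n) (x, 0, 0)) - 1 - cos (2 * pi * x)\<bar> \<le> 180 / 4 ^ n"
proof -
  obtain y where "run (reflect_steps l) (x, 0, 0) = (y, 0, 0)" "0 \<le> y" "y \<le> 1"
    "cos (2 * pi * y) = cos (2 * pi * x)"
    using reflect_steps_cos[OF assms(1,2)] by blast
  then show ?thesis
    using cos_steps_error[of y n] assms(3) by (simp add: cos_program_def)
qed

lemma length_cos_program: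
  assumes "1 \<le> n"
  shows "length (cos_program l n) = l + (n + 1) * (2 * n + 1)"
proof -
  have "length (reflect_steps l) = l"
    by (induction l) auto
  moreover have "length (square_stage r \<alpha> \<beta>) = r + 1" for r \<alpha> \<beta>
    by (simp add: square_stage_def hat_steps_def)
  ultimately show ?thesis
    using assms by (cases n) (simp_all add: cos_program_def cos_steps_def length_concat
        sum_list_replicate algebra_simps)
qed

section \<open>The Fourier basis\<close>

definition fourier_amp :: "nat \<Rightarrow> real" where
  "fourier_amp n = (if n = 1 then 1 else sqrt 2)"

definition fourier_freq :: "nat \<Rightarrow> real" where
  "fourier_freq n = real (n div 2)"

definition fourier_phase :: "nat \<Rightarrow> real" where
  "fourier_phase n = (if odd n \<and> n \<noteq> 1 then - 1/4 else 0)"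

lemma fourier_psi_eq_cos:
  assumes "1 \<le> n"
  shows "fourier_psi n t = fourier_amp n * cos (2 * pi * (fourier_freq n * t + fourier_phase n))"
proof (cases "odd n \<and> n \<noteq> 1")
  case True
  have "2 * pi * (fourier_freq n * t - 1/4) = 2 * pi * real (n div 2) * t - pi / 2"
    by (simp add: fourier_freq_def algebra_simps)
  then show ?thesis
    using True by (simp add: fourier_psi_def fourier_amp_def fourier_phase_def cos_diff)
next
  case False
  then show ?thesis
    using assms by (auto simp: fourier_psi_def fourier_amp_def fourier_freq_def fourier_phase_def mult.assoc)
qed

text \<open>The integer shifts in the two arguments do not change the cosines but make both
  arguments nonnegative on the unit square.\<close>

lemma fourier_psi_product:
  assumes "1 \<le> j" "1 \<le> k"
  shows "fourier_psi j s * fourier_psi k t =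
    fourier_amp j * fourier_amp k / 2 *
      (cos (2 * pi * (fourier_freq j * s + fourier_freq k * t + (fourier_phase j + fourier_phase k + 1))) +
       cos (2 * pi * (fourier_freq j * s - fourier_freq k * t +
                      (fourier_phase j - fourier_phase k + fourier_freq k + 1))))"
proof -
  define A where "A = fourier_freq j * s + fourier_phase j"
  define B where "B = fourier_freq k * t + fourier_phase k"
  have sum: "cos (2 * pi * (fourier_freq j * s + fourier_freq k * t + (fourier_phase j + fourier_phase k + 1)))
      = cos (2 * pi * A + 2 * pi * B)"
    using cos_2pi_add_nat[of "A + B" 1] by (simp add: A_def B_def algebra_simps)
  have diff: "cos (2 * pi * (fourier_freq j * s - fourier_freq k * t +
                      (fourier_phase j - fourier_phase k + fourier_freq k + 1)))
      = cos (2 * pi * A - 2 * pi * B)"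
    using cos_2pi_add_nat[of "A - B" "k div 2 + 1"] by (simp add: A_def B_def fourier_freq_def algebra_simps)
  show ?thesis
    unfolding sum diff fourier_psi_eq_cos[OF assms(1)] fourier_psi_eq_cos[OF assms(2)]
      A_def[symmetric] B_def[symmetric]
    by (simp add: cos_add cos_diff algebra_simps)
qed

section \<open>ReLU networks\<close>

definition affine_in :: "nat \<Rightarrow> ((nat \<Rightarrow> real) \<Rightarrow> real) \<Rightarrow> bool" where
  "affine_in n f \<longleftrightarrow> (\<exists>v c. \<forall>x. f x = (\<Sum>j<n. v j * x j) + c)"

lemma affine_in_const: "affine_in n (\<lambda>x. c)"
  unfolding affine_in_def by (rule exI[of _ "\<lambda>j. 0"]) simp

lemma affine_in_coord:
  assumes "q < n"
  shows "affine_in n (\<lambda>x. x q)"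
proof -
  have "(\<Sum>j<n. (if j = q then 1 else 0) * x j) = (\<Sum>j<n. if j = q then x j else 0)" for x :: "nat \<Rightarrow> real"
    by (rule sum.cong) auto
  then have "(\<Sum>j<n. (if j = q then 1 else 0) * x j) = x q" for x :: "nat \<Rightarrow> real"
    using assms by simp
  then show ?thesis
    unfolding affine_in_def by (intro exI[of _ "\<lambda>j. if j = q then 1 else 0"] exI[of _ 0]) simp
qed

lemma affine_in_add:
  assumes "affine_in n f" "affine_in n g"
  shows "affine_in n (\<lambda>x. f x + g x)"
proof -
  obtain v c w d where "\<forall>x. f x = (\<Sum>j<n. v j * x j) + c" "\<forall>x. g x = (\<Sum>j<n. w j * x j) + d"
    using assms unfolding affine_in_def by blast
  then show ?thesis
    unfolding affine_in_def
    by (intro exI[of _ "\<lambda>j. v j + w j"] exI[of _ "c + d"]) (simp add: distrib_right sum.distrib)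
qed

lemma affine_in_scale:
  assumes "affine_in n f"
  shows "affine_in n (\<lambda>x. a * f x)"
proof -
  obtain v c where "\<forall>x. f x = (\<Sum>j<n. v j * x j) + c"
    using assms unfolding affine_in_def by blast
  then show ?thesis
    unfolding affine_in_def
    by (intro exI[of _ "\<lambda>j. a * v j"] exI[of _ "a * c"]) (simp add: distrib_left sum_distrib_left mult.assoc)
qed

lemma affine_in_diff:
  assumes "affine_in n f" "affine_in n g"
  shows "affine_in n (\<lambda>x. f x - g x)"
  using affine_in_add[OF assms(1) affine_in_scale[OF assms(2), of "-1"]] by simp

lemmas affine_in_intros = affine_in_add affine_in_diff affine_in_scale affine_in_coord affine_in_const

definition shallow_net :: "nat \<Rightarrow> nat \<Rightarrow> nat \<Rightarrow> ((nat \<Rightarrow> real) \<Rightarrow> (nat \<Rightarrow> real)) \<Rightarrow> bool" where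
  "shallow_net n m w F \<longleftrightarrow> (\<exists>M b Q. \<forall>x. \<forall>i<m.
     F x i = (\<Sum>k<w. Q i k * max ((\<Sum>j<n. M k j * x j) - b k) 0))"

definition relu_sum :: "nat \<Rightarrow> nat \<Rightarrow> ((nat \<Rightarrow> real) \<Rightarrow> real) \<Rightarrow> bool" where
  "relu_sum n w g \<longleftrightarrow> shallow_net n 1 w (\<lambda>x i. g x)"

lemma relu_sum_iff:
  "relu_sum n w g \<longleftrightarrow> (\<exists>M b q. \<forall>x. g x = (\<Sum>k<w. q k * max ((\<Sum>j<n. M k j * x j) - b k) 0))"
proof
  assume "relu_sum n w g"
  then have "\<exists>M b Q. \<forall>x. g x = (\<Sum>k<w. Q (0::nat) k * max ((\<Sum>j<n. M k j * x j) - b k) 0)"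
    unfolding relu_sum_def shallow_net_def by simp
  then show "\<exists>M b q. \<forall>x. g x = (\<Sum>k<w. q k * max ((\<Sum>j<n. M k j * x j) - b k) 0)"
    by (elim exE) (intro exI, assumption)
next
  assume "\<exists>M b q. \<forall>x. g x = (\<Sum>k<w. q k * max ((\<Sum>j<n. M k j * x j) - b k) 0)"
  then obtain M b q where "\<forall>x. g x = (\<Sum>k<w. q k * max ((\<Sum>j<n. M k j * x j) - b k) 0)"
    by blast
  then show "relu_sum n w g"
    unfolding relu_sum_def shallow_net_def by (intro exI[of _ M] exI[of _ b] exI[of _ "\<lambda>i. q"]) simp
qed

lemma sum_lessThan_add:
  fixes f :: "nat \<Rightarrow> 'a::comm_monoid_add"
  shows "(\<Sum>k<a + b. f k) = (\<Sum>k<a. f k) + (\<Sum>k<b. f (a + k))"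
  by (induction b) (simp_all add: add.assoc)

lemma shallow_net_add:
  assumes "shallow_net n m w1 F" "shallow_net n m w2 G"
  shows "shallow_net n m (w1 + w2) (\<lambda>x i. F x i + G x i)"
proof -
  obtain M1 b1 Q1 where 1: "\<forall>x. \<forall>i<m. F x i = (\<Sum>k<w1. Q1 i k * max ((\<Sum>j<n. M1 k j * x j) - b1 k) 0)"
    using assms(1) unfolding shallow_net_def by blast
  obtain M2 b2 Q2 where 2: "\<forall>x. \<forall>i<m. G x i = (\<Sum>k<w2. Q2 i k * max ((\<Sum>j<n. M2 k j * x j) - b2 k) 0)"
    using assms(2) unfolding shallow_net_def by blast
  define M where "M = (\<lambda>k. if k < w1 then M1 k else M2 (k - w1))"
  define b where "b = (\<lambda>k. if k < w1 then b1 k else b2 (k - w1))"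
  define Q where "Q = (\<lambda>i k. if k < w1 then Q1 i k else Q2 i (k - w1))"
  show ?thesis
    unfolding shallow_net_def
  proof (intro exI allI impI)
    fix x i assume "i < m"
    then show "F x i + G x i = (\<Sum>k<w1 + w2. Q i k * max ((\<Sum>j<n. M k j * x j) - b k) 0)"
      using 1 2 by (simp add: sum_lessThan_add M_def b_def Q_def)
  qed
qed

lemma shallow_net_zero: "shallow_net n m w (\<lambda>x i. 0)"
  unfolding shallow_net_def by (intro exI[of _ "\<lambda>k j. 0"] exI[of _ "\<lambda>k. 0"] exI[of _ "\<lambda>i k. 0"]) simp

lemma shallow_net_mono:
  assumes "shallow_net n m w F" "w \<le> w'"
  shows "shallow_net n m w' F"
  using shallow_net_add[OF assms(1) shallow_net_zero, of "w' - w"] assms(2) by simp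

lemma relu_sum_mono: "relu_sum n w g \<Longrightarrow> w \<le> w' \<Longrightarrow> relu_sum n w' g"
  unfolding relu_sum_def by (rule shallow_net_mono)

lemma relu_sum_zero: "relu_sum n w (\<lambda>x. 0)"
  unfolding relu_sum_def by (rule shallow_net_zero)

lemma relu_sum_add:
  "relu_sum n w1 f \<Longrightarrow> relu_sum n w2 g \<Longrightarrow> relu_sum n (w1 + w2) (\<lambda>x. f x + g x)"
  unfolding relu_sum_def by (drule (1) shallow_net_add) simp

lemma relu_sum_scale:
  assumes "relu_sum n w f"
  shows "relu_sum n w (\<lambda>x. c * f x)"
proof -
  obtain M b q where "\<forall>x. f x = (\<Sum>k<w. q k * max ((\<Sum>j<n. M k j * x j) - b k) 0)"
    using assms unfolding relu_sum_iff by blast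
  then show ?thesis
    unfolding relu_sum_iff
    by (intro exI[of _ M] exI[of _ b] exI[of _ "\<lambda>k. c * q k"]) (simp add: sum_distrib_left mult.assoc)
qed

lemma relu_sum_relu:
  assumes "affine_in n f"
  shows "relu_sum n 1 (\<lambda>x. max (f x) 0)"
proof -
  obtain v c where "\<forall>x. f x = (\<Sum>j<n. v j * x j) + c"
    using assms unfolding affine_in_def by blast
  then show ?thesis
    unfolding relu_sum_iff by (intro exI[of _ "\<lambda>k. v"] exI[of _ "\<lambda>k. - c"] exI[of _ "\<lambda>k. 1"]) simp
qed

lemma relu_sum_cong_le: "relu_sum n w f \<Longrightarrow> (\<And>x. g x = f x) \<Longrightarrow> w \<le> w' \<Longrightarrow> relu_sum n w' g"
  by (metis ext relu_sum_mono)

lemma relu_sum_affine: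
  assumes "affine_in n f"
  shows "relu_sum n 2 f"
proof -
  have "relu_sum n (1 + 1) (\<lambda>x. max (f x) 0 + (-1) * max ((-1) * f x) 0)"
    using assms by (intro relu_sum_add relu_sum_scale relu_sum_relu affine_in_intros)
  then show ?thesis
    by (rule relu_sum_cong_le) auto
qed

lemma relu_sum_hat:
  assumes "affine_in n f"
  shows "relu_sum n 3 (\<lambda>x. hat (f x))"
proof -
  have "relu_sum n (1 + (1 + 1)) (\<lambda>x. 2 * max (f x) 0 + ((-4) * max (f x - 1/2) 0 + 2 * max (f x - 1) 0))"
    using assms by (intro relu_sum_add relu_sum_scale relu_sum_relu affine_in_intros)
  then show ?thesis
    by (rule relu_sum_cong_le) (simp_all add: hat_def)
qed

lemma relu_sum_clamp_abs:
  assumes "affine_in n f"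
  shows "relu_sum n 4 (\<lambda>x. clamp_abs (f x))"
proof -
  have "relu_sum n (1 + (1 + (1 + 1)))
    (\<lambda>x. max (f x) 0 + ((-1) * max (f x - 1) 0 + (max ((-1) * f x) 0 + (-1) * max ((-1) * f x - 1) 0)))"
    using assms by (intro relu_sum_add relu_sum_scale relu_sum_relu affine_in_intros)
  then show ?thesis
    by (rule relu_sum_cong_le) (auto simp: clamp_abs_def max_def min_def)
qed

lemma relu_sum_abs:
  assumes "affine_in n f"
  shows "relu_sum n 2 (\<lambda>x. \<bar>f x\<bar>)"
proof -
  have "relu_sum n (1 + 1) (\<lambda>x. max (f x) 0 + max ((-1) * f x) 0)"
    using assms by (intro relu_sum_add relu_sum_relu affine_in_intros)
  then show ?thesis
    by (rule relu_sum_cong_le) auto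
qed

lemma shallow_net_coordinate:
  assumes "relu_sum n w g"
  shows "shallow_net n m w (\<lambda>x i. if i = i0 then g x else 0)"
proof -
  obtain M b q where g: "\<forall>x. g x = (\<Sum>k<w. q k * max ((\<Sum>j<n. M k j * x j) - b k) 0)"
    using assms unfolding relu_sum_iff by blast
  show ?thesis
    unfolding shallow_net_def
  proof (intro exI allI impI)
    fix x i
    show "(if i = i0 then g x else 0) =
        (\<Sum>k<w. (if i = i0 then q k else 0) * max ((\<Sum>j<n. M k j * x j) - b k) 0)"
      using g by (cases "i = i0") simp_all
  qed
qed

lemma shallow_net_of_coordinates:
  assumes "\<And>i. i < m \<Longrightarrow> relu_sum n w (\<lambda>x. F x i)"
  shows "shallow_net n m (m * w) F"
proof -
  have "shallow_net n m (l * w) (\<lambda>x i. if i < l then F x i else 0)" if "l \<le> m" for l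
    using that
  proof (induction l)
    case 0
    then show ?case using shallow_net_zero by simp
  next
    case (Suc l)
    have "shallow_net n m (l * w + w) (\<lambda>x i. (if i < l then F x i else 0) + (if i = l then F x l else 0))"
      using Suc by (intro shallow_net_add shallow_net_coordinate assms) auto
    moreover have "(\<lambda>x i. (if i < l then F x i else 0) + (if i = l then F x l else 0)) =
        (\<lambda>x i. if i < Suc l then F x i else 0)"
      by (auto intro!: ext)
    ultimately show ?case
      by (simp add: add.commute)
  qed
  from this[of m] show ?thesis
    unfolding shallow_net_def by simp
qed

definition layer :: "(nat \<Rightarrow> real) \<Rightarrow> (nat \<Rightarrow> nat \<Rightarrow> real) \<times> (nat \<Rightarrow> real) \<times> nat \<Rightarrow> nat \<Rightarrow> real" where
  "layer = (\<lambda>h (A, b, d). mat_app A d (relu_shift b h))"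

text \<open>An entry \<open>(A, b, d)\<close> of \<open>Ls\<close> is a hidden layer of width \<open>d\<close> with bias \<open>b\<close>, followed by
  the matrix \<open>A\<close>; only the first \<open>m\<close> outputs of the network are prescribed.\<close>

definition deep_net :: "nat \<Rightarrow> nat \<Rightarrow> nat \<Rightarrow> nat \<Rightarrow> ((nat \<Rightarrow> real) \<Rightarrow> (nat \<Rightarrow> real)) \<Rightarrow> bool" where
  "deep_net n m L W F \<longleftrightarrow> (\<exists>A0 Ls. length Ls = L \<and> (\<forall>l\<in>set Ls. snd (snd l) \<le> W) \<and>
      (\<forall>x. \<forall>i<m. foldl layer (mat_app A0 n x) Ls i = F x i))"

lemma deep_net_of_shallow:
  assumes "shallow_net n m w F"
  shows "deep_net n m 1 w F"
proof -
  obtain M b Q where "\<forall>x. \<forall>i<m. F x i = (\<Sum>k<w. Q i k * max ((\<Sum>j<n. M k j * x j) - b k) 0)"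
    using assms unfolding shallow_net_def by blast
  then show ?thesis
    unfolding deep_net_def
    by (intro exI[of _ M] exI[of _ "[(Q, b, w)]"]) (simp add: layer_def mat_app_def relu_shift_def)
qed

lemma mat_app_mat_app:
  "mat_app B m (mat_app A k h) = mat_app (\<lambda>i j. \<Sum>l<m. B i l * A l j) k h"
proof
  fix i
  have "(\<Sum>l<m. B i l * (\<Sum>j<k. A l j * h j)) = (\<Sum>l<m. \<Sum>j<k. B i l * A l j * h j)"
    by (simp add: sum_distrib_left mult.assoc)
  also have "\<dots> = (\<Sum>j<k. (\<Sum>l<m. B i l * A l j) * h j)"
    by (subst sum.swap) (simp add: sum_distrib_right)
  finally show "mat_app B m (mat_app A k h) i = mat_app (\<lambda>i j. \<Sum>l<m. B i l * A l j) k h i"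
    unfolding mat_app_def .
qed

lemma mat_app_cong: "(\<And>j. j < n \<Longrightarrow> x j = y j) \<Longrightarrow> mat_app A n x = mat_app A n y"
  unfolding mat_app_def by (intro ext sum.cong) auto

text \<open>The output matrix of the first network and the input matrix of the second are merged
  into one matrix, so no layer is spent on the composition.\<close>

lemma deep_net_comp:
  assumes F: "deep_net n m La W F" and G: "deep_net m p Lb W G" and "1 \<le> La"
  shows "deep_net n p (La + Lb) W (\<lambda>x. G (F x))"
proof -
  obtain A0 Ls1 where 1: "length Ls1 = La" "\<forall>l\<in>set Ls1. snd (snd l) \<le> W"
    "\<forall>x. \<forall>i<m. foldl layer (mat_app A0 n x) Ls1 i = F x i"
    using F unfolding deep_net_def by blast
  obtain B0 Ls2 where 2: "length Ls2 = Lb" "\<forall>l\<in>set Ls2. snd (snd l) \<le> W"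
    "\<forall>x. \<forall>i<p. foldl layer (mat_app B0 m x) Ls2 i = G x i"
    using G unfolding deep_net_def by blast
  obtain Ls1' A b d where Ls1: "Ls1 = Ls1' @ [(A, b, d)]"
    using \<open>1 \<le> La\<close> 1(1) by (cases Ls1 rule: rev_exhaust) auto
  define Ls where "Ls = Ls1' @ [(\<lambda>i j. \<Sum>l<m. B0 i l * A l j, b, d)] @ Ls2"
  have "foldl layer (mat_app A0 n x) Ls = foldl layer (mat_app B0 m (F x)) Ls2" for x
  proof -
    have "mat_app B0 m (foldl layer (mat_app A0 n x) Ls1) = mat_app B0 m (F x)"
      using 1(3) by (intro mat_app_cong) simp
    then show ?thesis
      by (simp add: Ls_def Ls1 layer_def mat_app_mat_app)
  qed
  then have "\<forall>x. \<forall>i<p. foldl layer (mat_app A0 n x) Ls i = G (F x) i"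
    using 2(3) by simp
  moreover have "length Ls = La + Lb" "\<forall>l\<in>set Ls. snd (snd l) \<le> W"
    using 1 2 by (auto simp: Ls_def Ls1)
  ultimately show ?thesis
    unfolding deep_net_def by blast
qed

lemma deep_net_chain:
  assumes "Fs \<noteq> []" "\<forall>F\<in>set Fs. shallow_net k k W F"
  shows "deep_net k k (length Fs) W (run Fs)"
  using assms
proof (induction Fs)
  case Nil
  then show ?case by simp
next
  case (Cons F Fs)
  have F: "deep_net k k 1 W F"
    using Cons.prems(2) deep_net_of_shallow[of k k W F] by simp
  show ?case
  proof (cases "Fs = []")
    case True
    then show ?thesis
      using F by (simp add: fun_eq_iff)
  next
    case False
    then have "deep_net k k (1 + length Fs) W (\<lambda>x. run Fs (F x))"
      using Cons by (intro deep_net_comp[OF F]) auto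
    then show ?thesis
      by (simp add: fun_eq_iff)
  qed
qed

lemma deep_net_relu_net:
  assumes "deep_net n m L W F"
  shows "\<exists>d As bs. is_relu_net n m L W d As bs \<and> (\<forall>x. \<forall>i<m. relu_net_eval d As bs x i = F x i)"
proof -
  obtain A0 Ls where h: "length Ls = L" "\<forall>l\<in>set Ls. snd (snd l) \<le> W"
    "\<forall>x. \<forall>i<m. foldl layer (mat_app A0 n x) Ls i = F x i"
    using assms unfolding deep_net_def by blast
  define d where "d = n # map (\<lambda>l. snd (snd l)) Ls @ [m]"
  define As where "As = A0 # map fst Ls"
  define bs where "bs = map (\<lambda>l. fst (snd l)) Ls"
  have "zip (map fst Ls) (zip (map (\<lambda>l. fst (snd l)) Ls) (map (\<lambda>l. snd (snd l)) Ls @ [m])) = Ls"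
    by (induction Ls) auto
  then have "relu_net_eval d As bs x = foldl layer (mat_app A0 n x) Ls" for x
    by (simp add: relu_net_eval_def d_def As_def bs_def layer_def)
  moreover have "is_relu_net n m L W d As bs"
    unfolding is_relu_net_def
  proof (intro conjI ballI)
    show "length d = L + 2" "d ! 0 = n" "d ! (L + 1) = m" "length As = L + 1" "length bs = L"
      using h(1) by (auto simp: d_def As_def bs_def nth_append)
    fix l assume l: "l \<in> {1..L}"
    then have "d ! l = snd (snd (Ls ! (l - 1)))"
      using h(1) by (cases l) (auto simp: d_def nth_append)
    then show "d ! l \<le> W"
      using h l by auto
  qed
  ultimately show ?thesis
    using h(3) by (intro exI[of _ d] exI[of _ As] exI[of _ bs]) auto
qed

section \<open>The approximating network\<close>

text \<open>The two cosines of \<open>fourier_psi_product\<close> are computed side by side: \<open>twin T\<close> runs the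
  machine step \<open>T\<close> on coordinates 0--2 and 3--5.\<close>

definition state_pair :: "state \<Rightarrow> state \<Rightarrow> nat \<Rightarrow> real" where
  "state_pair P Q i =
     (if i = 0 then fst P else if i = 1 then fst (snd P) else if i = 2 then snd (snd P)
      else if i = 3 then fst Q else if i = 4 then fst (snd Q) else if i = 5 then snd (snd Q) else 0)"

definition twin :: "(state \<Rightarrow> state) \<Rightarrow> (nat \<Rightarrow> real) \<Rightarrow> (nat \<Rightarrow> real)" where
  "twin T x = state_pair (T (x 0, x 1, x 2)) (T (x 3, x 4, x 5))"

lemma run_twin: "run (map twin Ts) (state_pair P Q) = state_pair (run Ts P) (run Ts Q)"
proof (induction Ts arbitrary: P Q)
  case Nil
  then show ?case by simp
next
  case (Cons T Ts)
  have "twin T (state_pair P Q) = state_pair (T P) (T Q)"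
    by (simp add: twin_def state_pair_def)
  then show ?case
    using Cons.IH by simp
qed

lemma twin_shallow_net:
  assumes "\<And>c. c \<in> {0, 3} \<Longrightarrow> relu_sum 6 w (\<lambda>x. fst (T (x c, x (c + 1), x (c + 2))))"
    and "\<And>c. c \<in> {0, 3} \<Longrightarrow> relu_sum 6 w (\<lambda>x. fst (snd (T (x c, x (c + 1), x (c + 2)))))"
    and "\<And>c. c \<in> {0, 3} \<Longrightarrow> relu_sum 6 w (\<lambda>x. snd (snd (T (x c, x (c + 1), x (c + 2)))))"
  shows "shallow_net 6 6 (6 * w) (twin T)"
proof (rule shallow_net_of_coordinates)
  fix i :: nat assume "i < 6"
  then have "i \<in> {0, 1, 2, 3, 4, 5}" by auto
  then show "relu_sum 6 w (\<lambda>x. twin T x i)"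
    using assms[of 0] assms[of 3] by (elim insertE emptyE) (simp_all add: twin_def state_pair_def numeral_2_eq_2)
qed

text \<open>Every register of a machine step is a sum of at most 5 ReLUs, so one step is a hidden layer
  of width \<open>6 * 5 = 30\<close>.\<close>

lemma twin_hat_step: "shallow_net 6 6 30 (twin (hat_step s))"
proof -
  have "relu_sum 6 5 (\<lambda>x. fst (hat_step s (x c, x (c + 1), x (c + 2))))"
    and "relu_sum 6 5 (\<lambda>x. fst (snd (hat_step s (x c, x (c + 1), x (c + 2)))))"
    and "relu_sum 6 5 (\<lambda>x. snd (snd (hat_step s (x c, x (c + 1), x (c + 2)))))"
    if "c \<in> {0, 3}" for c
  proof -
    have x: "affine_in 6 (\<lambda>x. x c)" "affine_in 6 (\<lambda>x. x (c + 1))" "affine_in 6 (\<lambda>x. x (c + 2))"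
      using that by (auto intro: affine_in_coord)
    show "relu_sum 6 5 (\<lambda>x. fst (hat_step s (x c, x (c + 1), x (c + 2))))"
      by (rule relu_sum_cong_le[OF relu_sum_affine[OF x(1)]]) (simp_all add: hat_step_def)
    show "relu_sum 6 5 (\<lambda>x. fst (snd (hat_step s (x c, x (c + 1), x (c + 2)))))"
      by (rule relu_sum_cong_le[OF relu_sum_hat[OF x(2)]]) (simp_all add: hat_step_def)
    show "relu_sum 6 5 (\<lambda>x. snd (snd (hat_step s (x c, x (c + 1), x (c + 2)))))"
      by (rule relu_sum_cong_le[OF relu_sum_add[OF relu_sum_affine[OF x(3)]
            relu_sum_scale[OF relu_sum_hat[OF x(2)], of "1 / 4 ^ s"]]])
        (simp_all add: hat_step_def)
  qed
  then show ?thesis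
    using twin_shallow_net[of 5 "hat_step s"] by simp
qed

lemma twin_square_start: "shallow_net 6 6 30 (twin (square_start \<alpha> \<beta>))"
proof -
  have "relu_sum 6 5 (\<lambda>x. clamp_abs (\<alpha> * (x c - x (c + 2)) + \<beta>))" if "c \<in> {0, 3}" for c
    using that by (intro relu_sum_cong_le[OF relu_sum_clamp_abs]) (auto intro!: affine_in_intros)
  then show ?thesis
    using twin_shallow_net[of 5 "square_start \<alpha> \<beta>"] relu_sum_zero
    by (simp add: square_start_def readout_def)
qed

lemma twin_reflect_step: "shallow_net 6 6 30 (twin (reflect_step r))"
proof -
  have "relu_sum 6 5 (\<lambda>x. r - \<bar>x c - r\<bar>)" if "c \<in> {0, 3}" for c
  proof -
    have "relu_sum 6 (2 + 2) (\<lambda>x. r + (-1) * \<bar>x c - r\<bar>)"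
      using that by (intro relu_sum_add relu_sum_scale relu_sum_abs relu_sum_affine affine_in_intros) auto
    then show ?thesis
      by (rule relu_sum_cong_le) auto
  qed
  then show ?thesis
    using twin_shallow_net[of 5 "reflect_step r"] relu_sum_zero
    by (simp add: reflect_step_def)
qed

lemma twin_cos_program:
  assumes "T \<in> set (cos_program l n)"
  shows "shallow_net 6 6 30 (twin T)"
proof -
  have stage: "shallow_net 6 6 30 (twin T)" if "T \<in> set (square_stage r \<alpha> \<beta>)" for T r \<alpha> \<beta>
    using that by (auto simp: square_stage_def hat_steps_def twin_square_start twin_hat_step)
  have reflect: "shallow_net 6 6 30 (twin T)" if "T \<in> set (reflect_steps l)" for T l
    using that by (induction l) (auto simp: twin_reflect_step)
  show ?thesis
    using assms by (auto simp: cos_program_def cos_steps_def dest: stage reflect split: if_splits)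
qed

lemma deep_net_cos_pair:
  assumes f: "affine_in 2 f" and g: "affine_in 2 g" and "1 \<le> n"
  shows "deep_net 2 1 (l + (n + 1) * (2 * n + 1) + 2) 30 (\<lambda>x i.
    K * ((2 * readout (run (cos_program l n) (f x, 0, 0)) - 1) +
         (2 * readout (run (cos_program l n) (g x, 0, 0)) - 1)))"
proof -
  define P where "P = cos_program l n"
  have input_layer: "shallow_net 2 6 (6 * 2) (\<lambda>x. state_pair (f x, 0, 0) (g x, 0, 0))"
  proof (rule shallow_net_of_coordinates)
    fix i :: nat assume "i < 6"
    then show "relu_sum 2 2 (\<lambda>x. state_pair (f x, 0, 0) (g x, 0, 0) i)"
      using relu_sum_affine[OF f] relu_sum_affine[OF g] relu_sum_zero
      by (cases "i = 0"; cases "i = 3") (simp_all add: state_pair_def cong: if_cong)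
  qed
  have input_net: "deep_net 2 6 1 30 (\<lambda>x. state_pair (f x, 0, 0) (g x, 0, 0))"
    using deep_net_of_shallow[OF shallow_net_mono[OF input_layer, of 30]] by simp
  have "P \<noteq> []"
    using length_cos_program[OF assms(3), of l] by (auto simp: P_def)
  then have middle_net: "deep_net 6 6 (length P) 30 (run (map twin P))"
    using deep_net_chain[of "map twin P" 6 30] twin_cos_program by (auto simp: P_def)
  define out where "out = (\<lambda>y :: nat \<Rightarrow> real. K * ((2 * (y 0 - y 2) - 1) + (2 * (y 3 - y 5) - 1)))"
  have output_layer: "shallow_net 6 1 (1 * 2) (\<lambda>y i. out y)"
    unfolding out_def by (rule shallow_net_of_coordinates) (intro relu_sum_affine affine_in_intros; simp)
  have output_net: "deep_net 6 1 1 30 (\<lambda>y i. out y)"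
    using deep_net_of_shallow[OF shallow_net_mono[OF output_layer, of 30]] by simp
  have "deep_net 2 1 (1 + length P + 1) 30 (\<lambda>x i. out (run (map twin P) (state_pair (f x, 0, 0) (g x, 0, 0))))"
    using deep_net_comp[OF deep_net_comp[OF input_net middle_net] output_net] by simp
  then show ?thesis
    using length_cos_program[OF assms(3), of l]
    by (simp add: P_def run_twin out_def state_pair_def readout_def split_def add.commute)
qed

lemma fourier_product_arguments_bounds:
  fixes j k :: nat and s t :: real
  assumes "0 \<le> s" "s \<le> 1" "0 \<le> t" "t \<le> 1"
  defines "X1 \<equiv> fourier_freq j * s + fourier_freq k * t + (fourier_phase j + fourier_phase k + 1)"
    and "X2 \<equiv> fourier_freq j * s - fourier_freq k * t + (fourier_phase j - fourier_phase k + fourier_freq k + 1)"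
  shows "0 \<le> X1" "X1 \<le> real (max j k) + 2" "0 \<le> X2" "X2 \<le> real (max j k) + 2"
proof -
  have freq: "0 \<le> fourier_freq n" "2 * fourier_freq n \<le> real (max j k)" if "n \<in> {j, k}" for n
    using that by (auto simp: fourier_freq_def)
  have phase: "- 1/4 \<le> fourier_phase n" "fourier_phase n \<le> 0" for n
    by (simp_all add: fourier_phase_def)
  have "0 \<le> fourier_freq j * s" "fourier_freq j * s \<le> fourier_freq j"
    "0 \<le> fourier_freq k * t" "fourier_freq k * t \<le> fourier_freq k"
    using assms(1-4) freq by (simp_all add: mult_left_le)
  then show "0 \<le> X1" "X1 \<le> real (max j k) + 2" "0 \<le> X2" "X2 \<le> real (max j k) + 2"
    using freq[of j] freq[of k] phase[of j] phase[of k] by (auto simp: X1_def X2_def)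
qed

lemma fourier_product_net:
  assumes "1 \<le> j" "1 \<le> k" "real (max j k) + 2 \<le> 2 ^ l" "1 \<le> n"
  shows "\<exists>F. deep_net 2 1 (l + (n + 1) * (2 * n + 1) + 2) 30 F \<and>
    (\<forall>s\<in>{0..1}. \<forall>t\<in>{0..1}.
       \<bar>fourier_psi j s * fourier_psi k t - F (\<lambda>i. if i = 0 then s else t) 0\<bar> \<le> 360 / 4 ^ n)"
proof -
  define K where "K = fourier_amp j * fourier_amp k / 2"
  define f where "f x = fourier_freq j * x 0 + fourier_freq k * x 1 + (fourier_phase j + fourier_phase k + 1)"
    for x :: "nat \<Rightarrow> real"
  define g where "g x = fourier_freq j * x 0 - fourier_freq k * x 1 +
      (fourier_phase j - fourier_phase k + fourier_freq k + 1)" for x :: "nat \<Rightarrow> real"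
  define approx where "approx X = 2 * readout (run (cos_program l n) (X, 0, 0)) - 1" for X
  have "affine_in 2 f" "affine_in 2 g"
    unfolding f_def g_def by (intro affine_in_intros; simp)+
  then have "deep_net 2 1 (l + (n + 1) * (2 * n + 1) + 2) 30 (\<lambda>x i. K * (approx (f x) + approx (g x)))"
    unfolding approx_def using assms(4) by (rule deep_net_cos_pair)
  moreover have "\<bar>fourier_psi j s * fourier_psi k t - K * (approx (f x) + approx (g x))\<bar> \<le> 360 / 4 ^ n"
    if "s \<in> {0..1}" "t \<in> {0..1}" "x = (\<lambda>i. if i = 0 then s else t)" for s t x
  proof -
    have K: "0 \<le> K" "K \<le> 1"
      using sqrt2_less_2 by (auto simp: K_def fourier_amp_def)
    have err: "\<bar>approx X - cos (2 * pi * X)\<bar> \<le> 180 / 4 ^ n" if "0 \<le> X" "X \<le> real (max j k) + 2" for X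
      unfolding approx_def using that assms(3,4) by (intro cos_program_error) auto
    have "fourier_psi j s * fourier_psi k t = K * (cos (2 * pi * f x) + cos (2 * pi * g x))"
      using fourier_psi_product[OF assms(1,2), of s t] that(3) by (simp add: K_def f_def g_def)
    then have "fourier_psi j s * fourier_psi k t - K * (approx (f x) + approx (g x)) =
        K * ((cos (2 * pi * f x) - approx (f x)) + (cos (2 * pi * g x) - approx (g x)))"
      by (simp add: algebra_simps)
    then have "\<bar>fourier_psi j s * fourier_psi k t - K * (approx (f x) + approx (g x))\<bar> =
        K * \<bar>(cos (2 * pi * f x) - approx (f x)) + (cos (2 * pi * g x) - approx (g x))\<bar>"
      using K by (simp add: abs_mult)
    also have "\<dots> \<le> 1 * (180 / 4 ^ n + 180 / 4 ^ n)"
      using fourier_product_arguments_bounds[of s t j k] that err[of "f x"] err[of "g x"] K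
      by (intro mult_mono order_trans[OF abs_triangle_ineq add_mono]) (auto simp: f_def g_def abs_minus_commute)
    finally show ?thesis
      by simp
  qed
  ultimately show ?thesis
    by blast
qed

section \<open>Size bounds\<close>

lemma ln_2_ge_half: "1/2 \<le> ln (2::real)"
  using ln_le_minus_one[of "1/2"] by (simp add: ln_div)

lemma exponent_log_bound:
  fixes b y :: real
  assumes "1 < b" "1 \<le> y"
  shows "\<exists>n. y \<le> b ^ n \<and> real n \<le> log b y + 1"
proof (intro exI conjI)
  have "0 \<le> log b y"
    using assms by simp
  then show "real (nat \<lceil>log b y\<rceil>) \<le> log b y + 1"
    by linarith
  have "y = b powr log b y"
    using assms by simp
  also have "\<dots> \<le> b powr real (nat \<lceil>log b y\<rceil>)"
    using assms by (intro powr_mono) linarith+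
  also have "\<dots> = b ^ nat \<lceil>log b y\<rceil>"
    using assms by (intro powr_realpow) simp
  finally show "y \<le> b ^ nat \<lceil>log b y\<rceil>" .
qed

lemma log2_le_ln:
  assumes "1 \<le> m"
  shows "log 2 (real m + 2) + 1 \<le> 8 * ln (2 * real m)"
proof -
  have "ln (real m + 2) \<le> ln (2 * (2 * real m))"
    using assms by simp
  also have "\<dots> = ln 2 + ln (2 * real m)"
    using assms by (intro ln_mult_pos) auto
  finally have "ln (real m + 2) / ln 2 \<le> (ln 2 + ln (2 * real m)) / ln 2"
    using ln_2_ge_half by (intro divide_right_mono) auto
  also have "\<dots> = 1 + ln (2 * real m) / ln 2"
    using ln_2_ge_half by (simp add: add_divide_distrib)
  also have "\<dots> \<le> 1 + ln (2 * real m) / (1/2)"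
    using assms ln_2_ge_half by (intro add_left_mono divide_left_mono) auto
  finally have "log 2 (real m + 2) \<le> 1 + 2 * ln (2 * real m)"
    by (simp add: log_def field_simps)
  moreover have "ln 2 \<le> ln (2 * real m)"
    using assms by simp
  ultimately show ?thesis
    using ln_2_ge_half by linarith
qed

lemma log4_le_ln:
  fixes \<epsilon> :: real
  assumes "0 < \<epsilon>" "\<epsilon> < 1/2"
  shows "log 4 (360 / \<epsilon>) + 1 \<le> 12 * ln (1 / \<epsilon>)"
proof -
  have "ln (360::real) \<le> ln (2 ^ 9)"
    by simp
  also have "\<dots> = 9 * ln 2"
    by (subst ln_realpow) auto
  finally have "ln (360::real) \<le> 9 * ln 2" .
  moreover have "ln (4::real) = 2 * ln 2"
    using ln_realpow[of 2 2] by simp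
  moreover have "ln 2 \<le> ln (1 / \<epsilon>)"
    using assms by (simp add: field_simps)
  ultimately have "log 4 (360 / \<epsilon>) \<le> (9 * ln 2 + ln (1 / \<epsilon>)) / (2 * ln 2)"
    using assms ln_2_ge_half by (simp add: log_def ln_div divide_right_mono)
  also have "\<dots> \<le> 9/2 + ln (1 / \<epsilon>)"
    using ln_2_ge_half assms by (simp add: field_simps)
  finally show ?thesis
    using ln_2_ge_half \<open>ln 2 \<le> ln (1 / \<epsilon>)\<close> by linarith
qed

lemma size_arithmetic:
  fixes P Q A N :: real
  assumes "1/2 \<le> P" "1/2 \<le> Q" "A \<le> 8 * P" "0 \<le> N" "N \<le> 12 * Q"
  shows "A + (N + 1) * (2 * N + 1) + 2 \<le> 1000 * P * Q^2" "30 \<le> 1000 * P * Q^3"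
proof -
  define R where "R = P * Q^2"
  have "(N + 1) * (2 * N + 1) \<le> (14 * Q) * (26 * Q)"
    using assms by (intro mult_mono) auto
  then have "(N + 1) * (2 * N + 1) \<le> 364 * Q^2"
    by (simp add: power2_eq_square)
  moreover have "1/4 \<le> Q^2"
    using power_mono[OF assms(2), of 2] by (simp add: power2_eq_square)
  then have R: "P * (1/4) \<le> R"
    unfolding R_def using assms(1) by (intro mult_left_mono) auto
  moreover have "(1/2) * Q^2 \<le> R"
    unfolding R_def using assms(1) by (intro mult_right_mono) auto
  ultimately have "A + (N + 1) * (2 * N + 1) + 2 \<le> 1000 * R"
    using assms(1,3) by linarith
  then show "A + (N + 1) * (2 * N + 1) + 2 \<le> 1000 * P * Q^2"
    by (simp add: R_def mult.assoc)
  have "(1/8) * (1/2) \<le> R * Q"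
    using R assms(1,2) by (intro mult_mono) auto
  then show "30 \<le> 1000 * P * Q^3"
    by (simp add: R_def power3_eq_cube power2_eq_square mult.assoc)
qed

lemma fourier_product_relu_net:
  fixes \<epsilon> :: real
  assumes j: "1 \<le> j" and k: "1 \<le> k" and \<epsilon>: "0 < \<epsilon>" "\<epsilon> < 1/2"
  shows "\<exists>L W d As bs.
    is_relu_net 2 1 L W d As bs \<and>
    real L \<le> 1000 * ln (2 * real (max j k)) * (ln (1 / \<epsilon>))^2 \<and>
    real W \<le> 1000 * ln (2 * real (max j k)) * (ln (1 / \<epsilon>))^3 \<and>
    (\<forall>s\<in>{0..1}. \<forall>t\<in>{0..1}.
       \<bar>fourier_psi j s * fourier_psi k t - relu_net_eval d As bs (\<lambda>i. if i = 0 then s else t) 0\<bar> \<le> \<epsilon>)"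
proof -
  define P Q where "P = ln (2 * real (max j k))" and "Q = ln (1 / \<epsilon>)"
  have "ln 2 \<le> P" "ln 2 \<le> Q"
    using j \<epsilon> by (simp_all add: P_def Q_def field_simps)
  then have PQ: "1/2 \<le> P" "1/2 \<le> Q"
    using ln_2_ge_half by linarith+
  have "1 \<le> max j k"
    using j by simp
  then obtain l where l: "real (max j k) + 2 \<le> 2 ^ l" "real l \<le> 8 * P"
    using exponent_log_bound[of 2 "real (max j k) + 2"] log2_le_ln[of "max j k"]
    by (auto simp: P_def)
  obtain n where n: "360 / \<epsilon> \<le> 4 ^ n" "real n \<le> 12 * Q"
    using exponent_log_bound[of 4 "360 / \<epsilon>"] log4_le_ln[OF \<epsilon>] \<epsilon>
    by (auto simp: Q_def)
  have "1 \<le> n"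
    using n(1) \<epsilon> by (cases n) (auto simp: field_simps)
  obtain F where F: "deep_net 2 1 (l + (n + 1) * (2 * n + 1) + 2) 30 F"
    and err: "\<forall>s\<in>{0..1}. \<forall>t\<in>{0..1}.
       \<bar>fourier_psi j s * fourier_psi k t - F (\<lambda>i. if i = 0 then s else t) 0\<bar> \<le> 360 / 4 ^ n"
    using fourier_product_net[OF j k l(1) \<open>1 \<le> n\<close>] by blast
  obtain d As bs where net: "is_relu_net 2 1 (l + (n + 1) * (2 * n + 1) + 2) 30 d As bs"
    and eval: "\<forall>x. relu_net_eval d As bs x 0 = F x 0"
    using deep_net_relu_net[OF F] by auto
  have "\<bar>fourier_psi j s * fourier_psi k t - relu_net_eval d As bs (\<lambda>i. if i = 0 then s else t) 0\<bar> \<le> \<epsilon>"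
    if "s \<in> {0..1}" "t \<in> {0..1}" for s t
  proof -
    have "\<bar>fourier_psi j s * fourier_psi k t - F (\<lambda>i. if i = 0 then s else t) 0\<bar> \<le> 360 / 4 ^ n"
      using err that by blast
    moreover have "360 / 4 ^ n \<le> \<epsilon>"
      using n(1) \<epsilon> by (simp add: field_simps)
    ultimately show ?thesis
      using eval by simp
  qed
  moreover have "real (l + (n + 1) * (2 * n + 1) + 2) \<le> 1000 * P * Q^2" "real (30::nat) \<le> 1000 * P * Q^3"
    using size_arithmetic[OF PQ l(2) _ n(2)] by (simp_all add: algebra_simps)
  ultimately show ?thesis
    using net unfolding P_def Q_def
    by (intro exI[of _ "l + (n + 1) * (2 * n + 1) + 2"] exI[of _ "30::nat"] exI[of _ d] exI[of _ As] exI[of _ bs]) simp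
qed

theorem lemmaE2:
  "\<exists>c>0. \<forall>j k :: nat. \<forall>\<epsilon> :: real. 1 \<le> j \<longrightarrow> 1 \<le> k \<longrightarrow> 0 < \<epsilon> \<longrightarrow> \<epsilon> < 1/2 \<longrightarrow>
     (\<exists>L W d As bs.
        is_relu_net 2 1 L W d As bs \<and>
        real L \<le> c * ln (2 * real (max j k)) * (ln (1 / \<epsilon>))^2 \<and>
        real W \<le> c * ln (2 * real (max j k)) * (ln (1 / \<epsilon>))^3 \<and>
        (\<forall>s\<in>{0..1}. \<forall>t\<in>{0..1}.
           \<bar>fourier_psi j s * fourier_psi k t -
            relu_net_eval d As bs (\<lambda>i. if i = 0 then s else t) 0\<bar> \<le> \<epsilon>))"
  by (intro exI[of _ "1000::real"] conjI allI impI fourier_product_relu_net) simp_all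

end
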